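(* Fix $e\in -\mathrm{int}(C)$ and define $v_e:\mathcal P^0_{\mp C}(Y)\to\overline{\mathbb R}^2$ by $v_e(A)=w_e(\{0\},A)=\big(-G^\ell_e(\{0\},A),\,G^u_e(A,\{0\})\big)$. Then $v_e$ is $s$-increasing on $\mathcal P^0_{\mp C}(Y)$, strictly $s$-increasing on the family of $\mp C$-compact sets in $\mathcal P^0_{\mp C}(Y)$, and for $A,B\in\mathcal P^0_{\mp C}(Y)$ with $A\in[B]^s$ one has $v_e(A)=v_e(B)$.
   Context: $Y$ is a real topological linear space and $C\subset Y$ is a convex, closed, pointed cone with nonempty interior. $\mathbb R^2$ is ordered by $\mathbb R^2_+$ ($a\le b$ iff $b-a\in\mathbb R^2_+$, $a<b$ iff $b-a\in\mathrm{int}\,\mathbb R^2_+$). $\mathcal P^0_{\mp C}(Y)$ is the family of nonempty $A\subset Y$ with $A+C\neq Y$ and $A-C\neq Y$. $C$-compact: every cover by sets $U_\alpha+C$, $U_\alpha$ open, has a finite subcover; $\mp C$-compact: $C$-compact and $-C$-compact. $A\preceq^s B$ iff $B\subset A+C$ and $A\subset B-C$; $A\prec^s B$ iff $B\subset A+\mathrm{int}C$ and $A\subset B-\mathrm{int}C$; $[A]^s$ is the class of $A$ under $A\sim^s B\iff (A\preceq^sB\text{ and }B\preceq^sA)$. $\phi_{e,A}(y)=\inf\{t\in\mathbb R: y\in te+A+C\}$; $G^\ell_e(A,B)=\sup_{b\in B}\phi_{e,A}(b)$; $G^u_e(B,A):=-G^\ell_e(-B,-A)$; $w_e(A,B)=(-G^\ell_e(A,B),G^u_e(B,A))$.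 A map $T$ is $s$-increasing on $\mathcal A$ if $A,B\in\mathcal A$, $A\preceq^sB$ imply $T(A)\le_{\mathbb R^2_+}T(B)$; strictly $s$-increasing if $A\prec^sB$ implies $T(A)<_{\mathbb R^2_+}T(B)$. *)

theory Defs
  imports "HOL-Analysis.Analysis"
begin

definition topological_linear_space :: "'a::{real_vector,topological_space} itself \<Rightarrow> bool" where
  "topological_linear_space _ \<longleftrightarrow>
     continuous_on UNIV (\<lambda>p::'a \<times> 'a. fst p + snd p) \<and>
     continuous_on UNIV (\<lambda>p::real \<times> 'a. fst p *\<^sub>R snd p)"

definition msum :: "'a::real_vector set \<Rightarrow> 'a set \<Rightarrow> 'a set" where
  "msum A B = {a + b | a b. a \<in> A \<and> b \<in> B}"

definition mdiff :: "'a::real_vector set \<Rightarrow> 'a set \<Rightarrow> 'a set" where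
  "mdiff A B = {a - b | a b. a \<in> A \<and> b \<in> B}"

definition P0 :: "'a::real_vector set \<Rightarrow> 'a set set" where
  "P0 C = {A. A \<noteq> {} \<and> msum A C \<noteq> UNIV \<and> mdiff A C \<noteq> UNIV}"

definition C_compact :: "'a::{real_vector,topological_space} set \<Rightarrow> 'a set \<Rightarrow> bool" where
  "C_compact C A \<longleftrightarrow>
     (\<forall>\<U>. (\<forall>U\<in>\<U>. open U) \<and> A \<subseteq> (\<Union>U\<in>\<U>. msum U C) \<longrightarrow>
        (\<exists>\<V>\<subseteq>\<U>. finite \<V> \<and> A \<subseteq> (\<Union>U\<in>\<V>. msum U C)))"

definition mp_C_compact :: "'a::{real_vector,topological_space} set \<Rightarrow> 'a set \<Rightarrow> bool" where
  "mp_C_compact C A \<longleftrightarrow> C_compact C A \<and> C_compact (uminus ` C) A"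

definition set_le_s :: "'a::real_vector set \<Rightarrow> 'a set \<Rightarrow> 'a set \<Rightarrow> bool" where
  "set_le_s C A B \<longleftrightarrow> B \<subseteq> msum A C \<and> A \<subseteq> mdiff B C"

definition set_less_s :: "'a::{real_vector,topological_space} set \<Rightarrow> 'a set \<Rightarrow> 'a set \<Rightarrow> bool" where
  "set_less_s C A B \<longleftrightarrow> B \<subseteq> msum A (interior C) \<and> A \<subseteq> mdiff B (interior C)"

definition set_equiv_s :: "'a::real_vector set \<Rightarrow> 'a set \<Rightarrow> 'a set \<Rightarrow> bool" where
  "set_equiv_s C A B \<longleftrightarrow> set_le_s C A B \<and> set_le_s C B A"

definition s_class :: "'a::real_vector set \<Rightarrow> 'a set \<Rightarrow> 'a set set" where
  "s_class C A = {B. set_equiv_s C A B}"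

text \<open>Scalarization functional, values in extended reals (\<open>inf \<emptyset> = +\<infinity>\<close>).\<close>
definition phi :: "'a::real_vector set \<Rightarrow> 'a \<Rightarrow> 'a set \<Rightarrow> 'a \<Rightarrow> ereal" where
  "phi C e A y = Inf {ereal t | t. y \<in> msum (msum {t *\<^sub>R e} A) C}"

definition G_l :: "'a::real_vector set \<Rightarrow> 'a \<Rightarrow> 'a set \<Rightarrow> 'a set \<Rightarrow> ereal" where
  "G_l C e A B = (SUP b\<in>B. phi C e A b)"

definition G_u :: "'a::real_vector set \<Rightarrow> 'a \<Rightarrow> 'a set \<Rightarrow> 'a set \<Rightarrow> ereal" where
  "G_u C e B A = - G_l C e (uminus ` B) (uminus ` A)"

definition w_e :: "'a::real_vector set \<Rightarrow> 'a \<Rightarrow> 'a set \<Rightarrow> 'a set \<Rightarrow> ereal \<times> ereal" where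
  "w_e C e A B = (- G_l C e A B, G_u C e B A)"

definition v_e :: "'a::real_vector set \<Rightarrow> 'a \<Rightarrow> 'a set \<Rightarrow> ereal \<times> ereal" where
  "v_e C e A = w_e C e {0} A"

text \<open>Componentwise order on \<open>\<overline>\<real>\<^sup>2\<close> induced by \<open>\<real>\<^sup>2\<^sub>+\<close> and its strict version (interior).\<close>
definition le2 :: "ereal \<times> ereal \<Rightarrow> ereal \<times> ereal \<Rightarrow> bool" where
  "le2 a b \<longleftrightarrow> fst a \<le> fst b \<and> snd a \<le> snd b"

definition lt2 :: "ereal \<times> ereal \<Rightarrow> ereal \<times> ereal \<Rightarrow> bool" where
  "lt2 a b \<longleftrightarrow> fst a < fst b \<and> snd a < snd b"

definition s_increasing :: "'a::real_vector set \<Rightarrow> 'a set set \<Rightarrow> ('a set \<Rightarrow> ereal \<times> ereal) \<Rightarrow> bool" where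
  "s_increasing C \<A> T \<longleftrightarrow> (\<forall>A\<in>\<A>. \<forall>B\<in>\<A>. set_le_s C A B \<longrightarrow> le2 (T A) (T B))"

definition strictly_s_increasing :: "'a::{real_vector,topological_space} set \<Rightarrow> 'a set set \<Rightarrow> ('a set \<Rightarrow> ereal \<times> ereal) \<Rightarrow> bool" where
  "strictly_s_increasing C \<A> T \<longleftrightarrow> (\<forall>A\<in>\<A>. \<forall>B\<in>\<A>. set_less_s C A B \<longrightarrow> lt2 (T A) (T B))"

end

theory Submission
  imports Defs
begin

text \<open>
  Both components of \<open>v\<^sub>e(A)\<close> are extreme values of the single function
  \<open>\<phi> = \<phi>\<^sub>e\<^sub>,\<^sub>{\<^sub>0\<^sub>}\<close> over \<open>A\<close>: \<open>v\<^sub>e(A) = (- sup \<phi>(A), - inf \<phi>(A))\<close>.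
  Since \<open>\<phi>\<close> is antitone for the order of \<open>C\<close>, the set relation \<open>\<preceq>\<^sup>s\<close> moves both the
  supremum and the infimum in the right direction, and \<open>\<sim>\<^sup>s\<close>-equivalent sets get equal
  values.  For \<open>\<prec>\<^sup>s\<close> every point gains a positive margin: if \<open>y + \<epsilon>e - z \<in> C\<close> then
  \<open>\<phi>(y) + \<epsilon> \<le> \<phi>(z)\<close>, and the margin persists on a neighbourhood, because \<open>-e\<close> is an
  interior point of \<open>C\<close>.  \<open>C\<close>-compactness (resp. \<open>-C\<close>-compactness) turns these local
  margins into a uniform one, and finiteness of \<open>\<phi>\<close> on sets of \<open>P\<^sup>0\<^sub>\<mp>\<^sub>C(Y)\<close> makes the
  inequalities strict.
\<close>

lemma tls_continuous_on_add:
  fixes f g :: "'b::topological_space \<Rightarrow> 'a::{real_vector,topological_space}"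
  assumes "topological_linear_space TYPE('a)" and "continuous_on S f" and "continuous_on S g"
  shows "continuous_on S (\<lambda>x. f x + g x)"
proof -
  have "continuous_on UNIV (\<lambda>p::'a \<times> 'a. fst p + snd p)"
    using assms(1) unfolding topological_linear_space_def by blast
  from continuous_on_compose2[OF this continuous_on_Pair[OF assms(2,3)]] show ?thesis
    by simp
qed

lemma tls_continuous_on_scaleR:
  fixes f :: "'b::topological_space \<Rightarrow> real" and g :: "'b \<Rightarrow> 'a::{real_vector,topological_space}"
  assumes "topological_linear_space TYPE('a)" and "continuous_on S f" and "continuous_on S g"
  shows "continuous_on S (\<lambda>x. f x *\<^sub>R g x)"
proof -
  have "continuous_on UNIV (\<lambda>p::real \<times> 'a. fst p *\<^sub>R snd p)"
    using assms(1) unfolding topological_linear_space_def by blast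
  from continuous_on_compose2[OF this continuous_on_Pair[OF assms(2,3)]] show ?thesis
    by simp
qed

lemma tls_open_translate:
  fixes U :: "'a::{real_vector,topological_space} set"
  assumes "topological_linear_space TYPE('a)" and "open U"
  shows "open {y. y + w \<in> U}"
proof -
  have "continuous_on UNIV (\<lambda>y::'a. y + w)"
    by (intro tls_continuous_on_add assms(1) continuous_on_id continuous_on_const)
  from open_vimage[OF assms(2) this] show ?thesis
    by (simp add: vimage_def)
qed

lemma tls_open_reflect:
  fixes U :: "'a::{real_vector,topological_space} set"
  assumes "topological_linear_space TYPE('a)" and "open U"
  shows "open {y. w - y \<in> U}"
proof -
  have "continuous_on UNIV (\<lambda>y::'a. w + (-1) *\<^sub>R y)"
    by (intro tls_continuous_on_add tls_continuous_on_scaleR assms(1)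
        continuous_on_id continuous_on_const)
  from open_vimage[OF assms(2) this] show ?thesis
    by (simp add: vimage_def)
qed

lemma tls_open_small_step:
  fixes U :: "'a::{real_vector,topological_space} set"
  assumes "topological_linear_space TYPE('a)" and "open U" and "c \<in> U"
  shows "\<exists>\<epsilon>>0. c + \<epsilon> *\<^sub>R y \<in> U"
proof -
  have "continuous_on UNIV (\<lambda>s::real. c + s *\<^sub>R y)"
    by (intro tls_continuous_on_add tls_continuous_on_scaleR assms(1)
        continuous_on_id continuous_on_const)
  from open_vimage[OF assms(2) this] have "open {s::real. c + s *\<^sub>R y \<in> U}"
    by (simp add: vimage_def)
  moreover have "0 \<in> {s::real. c + s *\<^sub>R y \<in> U}"
    using assms(3) by simp
  ultimately obtain r where r: "r > 0" "ball 0 r \<subseteq> {s::real. c + s *\<^sub>R y \<in> U}"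
    by (meson openE)
  have "r / 2 \<in> ball 0 r"
    using r(1) by (simp add: dist_real_def)
  then have "c + (r / 2) *\<^sub>R y \<in> U"
    using r(2) by blast
  with r(1) show ?thesis
    by (intro exI[of _ "r / 2"]) simp
qed

lemma C_compact_uniform_gap:
  fixes R :: "'a::{real_vector,topological_space} \<Rightarrow> 'b \<Rightarrow> real \<Rightarrow> bool"
  assumes "C_compact K B" and "B \<noteq> {}"
    and local_gap: "\<And>b. b \<in> B \<Longrightarrow> \<exists>U a \<epsilon>. open U \<and> b \<in> msum U K \<and> a \<in> A \<and> \<epsilon> > 0 \<and>
                                              (\<forall>y\<in>msum U K. R y a \<epsilon>)"
    and gap_mono: "\<And>y a \<epsilon> \<delta>. R y a \<epsilon> \<Longrightarrow> \<delta> \<le> \<epsilon> \<Longrightarrow> R y a \<delta>"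
  shows "\<exists>F \<delta>. finite F \<and> F \<noteq> {} \<and> F \<subseteq> A \<and> \<delta> > 0 \<and> (\<forall>b\<in>B. \<exists>a\<in>F. R b a \<delta>)"
proof -
  obtain U a \<epsilon> where loc: "\<And>b. b \<in> B \<Longrightarrow> open (U b) \<and> b \<in> msum (U b) K \<and> a b \<in> A \<and>
                                  \<epsilon> b > 0 \<and> (\<forall>y\<in>msum (U b) K. R y (a b) (\<epsilon> b))"
    using local_gap by metis
  have "B \<subseteq> (\<Union>V\<in>U ` B. msum V K)" and "\<forall>V\<in>U ` B. open V"
    using loc by auto
  then obtain \<V> where "\<V> \<subseteq> U ` B" "finite \<V>" and cover: "B \<subseteq> (\<Union>V\<in>\<V>. msum V K)"
    using \<open>C_compact K B\<close> unfolding C_compact_def by meson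
  then obtain B\<^sub>0 where B\<^sub>0: "B\<^sub>0 \<subseteq> B" "finite B\<^sub>0" "\<V> = U ` B\<^sub>0"
    by (meson finite_subset_image)
  have "B\<^sub>0 \<noteq> {}"
    using cover B\<^sub>0(3) \<open>B \<noteq> {}\<close> by auto
  define \<delta> where "\<delta> = Min (\<epsilon> ` B\<^sub>0)"
  have "\<delta> > 0"
    unfolding \<delta>_def using B\<^sub>0 \<open>B\<^sub>0 \<noteq> {}\<close> loc by auto
  have "\<exists>a'\<in>a ` B\<^sub>0. R b a' \<delta>" if "b \<in> B" for b
  proof -
    obtain b\<^sub>0 where "b\<^sub>0 \<in> B\<^sub>0" "b \<in> msum (U b\<^sub>0) K"
      using cover B\<^sub>0(3) \<open>b \<in> B\<close> by auto
    then have "R b (a b\<^sub>0) (\<epsilon> b\<^sub>0)" and "\<delta> \<le> \<epsilon> b\<^sub>0"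
      using loc B\<^sub>0(1,2) unfolding \<delta>_def by auto
    then show ?thesis
      using gap_mono \<open>b\<^sub>0 \<in> B\<^sub>0\<close> by blast
  qed
  then show ?thesis
    using B\<^sub>0 \<open>B\<^sub>0 \<noteq> {}\<close> \<open>\<delta> > 0\<close> loc by (intro exI[of _ "a ` B\<^sub>0"] exI[of _ \<delta>]) auto
qed

lemma mem_msum_of_zero_mem: "x \<in> U \<Longrightarrow> 0 \<in> K \<Longrightarrow> x \<in> msum U K"
  unfolding msum_def by force

lemma phi_singleton_zero: "phi C e {0} y = Inf (ereal ` {t. y - t *\<^sub>R e \<in> C})"
proof -
  have "{ereal t | t. y \<in> msum (msum {t *\<^sub>R e} {0}) C} = ereal ` {t. y - t *\<^sub>R e \<in> C}"
    unfolding msum_def by (auto, metis add.commute diff_add_cancel)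
  then show ?thesis
    unfolding phi_def by simp
qed

lemma zero_mem_msum_uminus_iff:
  "0 \<in> msum (msum {x} (uminus ` A)) C \<longleftrightarrow> (\<exists>a\<in>A. a - x \<in> C)"
proof
  assume "0 \<in> msum (msum {x} (uminus ` A)) C"
  then obtain a c where "a \<in> A" "c \<in> C" "0 = (x + - a) + c"
    unfolding msum_def by auto
  then have "a - x = c"
    by (simp add: algebra_simps eq_neg_iff_add_eq_0)
  then show "\<exists>a\<in>A. a - x \<in> C"
    using \<open>a \<in> A\<close> \<open>c \<in> C\<close> by blast
next
  assume "\<exists>a\<in>A. a - x \<in> C"
  then obtain a where "a \<in> A" "a - x \<in> C"
    by blast
  moreover have "0 = (x + - a) + (a - x)"
    by simp
  ultimately show "0 \<in> msum (msum {x} (uminus ` A)) C"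
    unfolding msum_def by blast
qed

lemma phi_uminus_at_zero: "phi C e (uminus ` A) 0 = (INF a\<in>A. phi C e {0} a)"
proof -
  have "{ereal t | t. 0 \<in> msum (msum {t *\<^sub>R e} (uminus ` A)) C} =
             ereal ` (\<Union>a\<in>A. {t. a - t *\<^sub>R e \<in> C})"
    unfolding zero_mem_msum_uminus_iff by auto
  moreover have "Inf (\<Union>a\<in>A. S a) = (INF a\<in>A. Inf (S a :: ereal set))" for S
    by (rule order_antisym) (blast intro: Inf_greatest Inf_lower INF_greatest INF_lower2)+
  ultimately show ?thesis
    unfolding phi_def[of C e "uminus ` A"] phi_singleton_zero image_UN by simp
qed

lemma v_e_eq: "v_e C e A = (- (SUP a\<in>A. phi C e {0} a), - (INF a\<in>A. phi C e {0} a))"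
  unfolding v_e_def w_e_def G_u_def G_l_def by (simp add: phi_uminus_at_zero)

locale scalarization =
  fixes C :: "'a::{real_vector,topological_space} set" and e :: 'a
  assumes tls: "topological_linear_space TYPE('a)"
    and convex_C: "convex C" and cone_C: "cone C"
    and neg_e_interior: "- e \<in> interior C"
begin

abbreviation \<phi> :: "'a \<Rightarrow> ereal" where "\<phi> \<equiv> phi C e {0}"

lemma add_mem: "x \<in> C \<Longrightarrow> y \<in> C \<Longrightarrow> x + y \<in> C"
  using convex_cone[of C] convex_C cone_C by simp

lemma scaleR_mem: "x \<in> C \<Longrightarrow> 0 \<le> c \<Longrightarrow> c *\<^sub>R x \<in> C"
  using cone_C unfolding cone_def by blast

lemma neg_e_mem: "- e \<in> C"
  using neg_e_interior interior_subset by blast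

lemma zero_mem: "0 \<in> C"
  using scaleR_mem[OF neg_e_mem, of 0] by simp

lemma phi_le: "y - t *\<^sub>R e \<in> C \<Longrightarrow> \<phi> y \<le> ereal t"
  unfolding phi_singleton_zero by (simp add: Inf_lower)

lemma phi_add_gap:
  assumes "y + \<epsilon> *\<^sub>R e - z \<in> C"
  shows "\<phi> y + ereal \<epsilon> \<le> \<phi> z"
  unfolding phi_singleton_zero[of C e z]
proof (rule Inf_greatest)
  fix x assume "x \<in> ereal ` {t. z - t *\<^sub>R e \<in> C}"
  then obtain t where t: "x = ereal t" "z - t *\<^sub>R e \<in> C"
    by auto
  have "y - (t - \<epsilon>) *\<^sub>R e = (y + \<epsilon> *\<^sub>R e - z) + (z - t *\<^sub>R e)"
    by (simp add: algebra_simps)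
  then have "y - (t - \<epsilon>) *\<^sub>R e \<in> C"
    using add_mem[OF assms t(2)] by argo
  then have "\<phi> y \<le> ereal (t - \<epsilon>)"
    by (rule phi_le)
  then show "\<phi> y + ereal \<epsilon> \<le> x"
    using t(1) by (cases "\<phi> y") auto
qed

corollary phi_antitone: "y - z \<in> C \<Longrightarrow> \<phi> y \<le> \<phi> z"
  using phi_add_gap[of y 0 z] by (simp add: zero_ereal_def)

lemma ex_sub_scaleR_e_mem: "\<exists>t. y - t *\<^sub>R e \<in> C"
proof -
  obtain \<epsilon> where "\<epsilon> > 0" "- e + \<epsilon> *\<^sub>R y \<in> C"
    using tls_open_small_step[OF tls open_interior neg_e_interior] interior_subset by blast
  then have "(1 / \<epsilon>) *\<^sub>R (- e + \<epsilon> *\<^sub>R y) \<in> C"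
    by (intro scaleR_mem) simp_all
  moreover have "(1 / \<epsilon>) *\<^sub>R (- e + \<epsilon> *\<^sub>R y) = y - (1 / \<epsilon>) *\<^sub>R e"
    using \<open>\<epsilon> > 0\<close> by (simp add: algebra_simps)
  ultimately have "y - (1 / \<epsilon>) *\<^sub>R e \<in> C"
    by simp
  then show ?thesis ..
qed

lemma phi_less_PInf: "\<phi> y < \<infinity>"
proof -
  obtain t where "y - t *\<^sub>R e \<in> C"
    using ex_sub_scaleR_e_mem by blast
  then have "\<phi> y \<le> ereal t"
    by (rule phi_le)
  then show ?thesis
    using le_less_trans by fastforce
qed

lemma phi_greater_MInf:
  assumes "mdiff A C \<noteq> UNIV" and "a \<in> A"
  shows "\<phi> a > - \<infinity>"
proof (rule ccontr)
  assume "\<not> \<phi> a > - \<infinity>"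
  then have MInf: "\<phi> a < ereal t" for t
    by simp
  have "z \<in> mdiff A C" for z
  proof -
    obtain s where s: "- z - s *\<^sub>R e \<in> C"
      using ex_sub_scaleR_e_mem by blast
    obtain t where "t < - s" "a - t *\<^sub>R e \<in> C"
      using MInf[of "- s"] unfolding phi_singleton_zero by (auto simp: Inf_less_iff)
    moreover have "(- s - t) *\<^sub>R (- e) \<in> C"
      using \<open>t < - s\<close> by (intro scaleR_mem neg_e_mem) simp
    ultimately have "(a - t *\<^sub>R e) + (- s - t) *\<^sub>R (- e) + (- z - s *\<^sub>R e) \<in> C"
      using add_mem s by blast
    then have "a - z \<in> C"
      by (simp add: algebra_simps)
    moreover have "z = a - (a - z)"
      by simp
    ultimately show ?thesis
      unfolding mdiff_def using \<open>a \<in> A\<close> by blast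
  qed
  then show False
    using assms(1) by auto
qed

lemma phi_finite: "A \<in> P0 C \<Longrightarrow> a \<in> A \<Longrightarrow> \<bar>\<phi> a\<bar> \<noteq> \<infinity>"
  using phi_greater_MInf[of A a] phi_less_PInf[of a] unfolding P0_def by auto

lemma v_e_mono:
  assumes "set_le_s C A B"
  shows "le2 (v_e C e A) (v_e C e B)"
proof -
  have "(SUP b\<in>B. \<phi> b) \<le> (SUP a\<in>A. \<phi> a)"
  proof (rule SUP_least)
    fix b assume "b \<in> B"
    then obtain a c where "a \<in> A" "c \<in> C" "b = a + c"
      using assms unfolding set_le_s_def msum_def by blast
    then show "\<phi> b \<le> (SUP a\<in>A. \<phi> a)"
      using phi_antitone[of b a] by (simp add: SUP_upper2)
  qed
  moreover have "(INF b\<in>B. \<phi> b) \<le> (INF a\<in>A. \<phi> a)"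
  proof (rule INF_greatest)
    fix a assume "a \<in> A"
    then obtain b c where "b \<in> B" "c \<in> C" "a = b - c"
      using assms unfolding set_le_s_def mdiff_def by blast
    then show "(INF b\<in>B. \<phi> b) \<le> \<phi> a"
      using phi_antitone[of b a] by (simp add: INF_lower2)
  qed
  ultimately show ?thesis
    unfolding le2_def v_e_eq by simp
qed

lemma phi_local_gap_above:
  assumes "c \<in> interior C"
  shows "\<exists>U \<epsilon>. open U \<and> a + c \<in> msum U C \<and> \<epsilon> > 0 \<and> (\<forall>y\<in>msum U C. \<phi> y + ereal \<epsilon> \<le> \<phi> a)"
proof -
  obtain \<epsilon> where "\<epsilon> > 0" "c + \<epsilon> *\<^sub>R e \<in> interior C"
    using tls_open_small_step[OF tls open_interior assms] by blast
  define U where "U = {u. u + (\<epsilon> *\<^sub>R e - a) \<in> interior C}"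
  have "open U"
    unfolding U_def by (rule tls_open_translate[OF tls open_interior])
  moreover have "a + c \<in> msum U C"
    using \<open>c + \<epsilon> *\<^sub>R e \<in> interior C\<close> zero_mem
    by (intro mem_msum_of_zero_mem) (auto simp: U_def algebra_simps)
  moreover have "\<phi> y + ereal \<epsilon> \<le> \<phi> a" if "y \<in> msum U C" for y
  proof -
    obtain u c' where "u \<in> U" "c' \<in> C" "y = u + c'"
      using \<open>y \<in> msum U C\<close> unfolding msum_def by blast
    then have "(u + (\<epsilon> *\<^sub>R e - a)) + c' \<in> C"
      using add_mem interior_subset unfolding U_def by blast
    then have "y + \<epsilon> *\<^sub>R e - a \<in> C"
      using \<open>y = u + c'\<close> by (simp add: algebra_simps)
    then show ?thesis
      by (rule phi_add_gap)
  qed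
  ultimately show ?thesis
    using \<open>\<epsilon> > 0\<close> by blast
qed

lemma phi_local_gap_below:
  assumes "c \<in> interior C"
  shows "\<exists>U \<epsilon>. open U \<and> b - c \<in> msum U (uminus ` C) \<and> \<epsilon> > 0 \<and>
               (\<forall>y\<in>msum U (uminus ` C). \<phi> b + ereal \<epsilon> \<le> \<phi> y)"
proof -
  obtain \<epsilon> where "\<epsilon> > 0" "c + \<epsilon> *\<^sub>R e \<in> interior C"
    using tls_open_small_step[OF tls open_interior assms] by blast
  define U where "U = {u. (b + \<epsilon> *\<^sub>R e) - u \<in> interior C}"
  have "open U"
    unfolding U_def by (rule tls_open_reflect[OF tls open_interior])
  moreover have "b - c \<in> msum U (uminus ` C)"
    using \<open>c + \<epsilon> *\<^sub>R e \<in> interior C\<close> zero_mem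
    by (intro mem_msum_of_zero_mem) (auto simp: U_def algebra_simps)
  moreover have "\<phi> b + ereal \<epsilon> \<le> \<phi> y" if "y \<in> msum U (uminus ` C)" for y
  proof -
    obtain u c' where "u \<in> U" "c' \<in> C" "y = u + - c'"
      using \<open>y \<in> msum U (uminus ` C)\<close> unfolding msum_def by blast
    then have "((b + \<epsilon> *\<^sub>R e) - u) + c' \<in> C"
      using add_mem interior_subset unfolding U_def by blast
    moreover have "b + \<epsilon> *\<^sub>R e - y = ((b + \<epsilon> *\<^sub>R e) - u) + c'"
      using \<open>y = u + - c'\<close> by simp
    ultimately have "b + \<epsilon> *\<^sub>R e - y \<in> C"
      by argo
    then show ?thesis
      by (rule phi_add_gap)
  qed
  ultimately show ?thesis
    using \<open>\<epsilon> > 0\<close> by blast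
qed

lemma phi_add_gap_mono: "\<phi> y + ereal \<epsilon> \<le> \<phi> z \<Longrightarrow> \<delta> \<le> \<epsilon> \<Longrightarrow> \<phi> y + ereal \<delta> \<le> \<phi> z"
  by (meson add_left_mono ereal_less_eq(3) order_trans)

lemma SUP_phi_less:
  assumes "A \<in> P0 C" and "B \<noteq> {}" and "C_compact C B" and less: "B \<subseteq> msum A (interior C)"
  shows "(SUP b\<in>B. \<phi> b) < (SUP a\<in>A. \<phi> a)"
proof -
  have local_gap: "\<exists>U a \<epsilon>. open U \<and> b \<in> msum U C \<and> a \<in> A \<and> \<epsilon> > 0 \<and>
                           (\<forall>y\<in>msum U C. \<phi> y + ereal \<epsilon> \<le> \<phi> a)"
    if "b \<in> B" for b
  proof -
    obtain a c where "a \<in> A" "c \<in> interior C" "b = a + c"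
      using less \<open>b \<in> B\<close> unfolding msum_def by blast
    then show ?thesis
      using phi_local_gap_above[of c a] by blast
  qed
  have "\<exists>F \<delta>. finite F \<and> F \<noteq> {} \<and> F \<subseteq> A \<and> \<delta> > 0 \<and> (\<forall>b\<in>B. \<exists>a\<in>F. \<phi> b + ereal \<delta> \<le> \<phi> a)"
    by (rule C_compact_uniform_gap[where R = "\<lambda>y a \<epsilon>. \<phi> y + ereal \<epsilon> \<le> \<phi> a",
          OF \<open>C_compact C B\<close> \<open>B \<noteq> {}\<close> local_gap phi_add_gap_mono])
  then obtain F \<delta> where F: "finite F" "F \<noteq> {}" "F \<subseteq> A" and "\<delta> > 0"
    and gap: "\<forall>b\<in>B. \<exists>a\<in>F. \<phi> b + ereal \<delta> \<le> \<phi> a"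
    by blast
  define m where "m = Max (\<phi> ` F)"
  have "m \<in> \<phi> ` F"
    unfolding m_def using F(1,2) by (intro Max_in) simp_all
  then obtain a\<^sub>0 where "a\<^sub>0 \<in> F" "\<phi> a\<^sub>0 = m"
    by (metis imageE)
  moreover have "\<bar>\<phi> a\<^sub>0\<bar> \<noteq> \<infinity>"
    using \<open>a\<^sub>0 \<in> F\<close> F(3) by (intro phi_finite[OF \<open>A \<in> P0 C\<close>]) blast
  ultimately obtain r where r: "m = ereal r"
    by (cases m) auto
  have "(SUP b\<in>B. \<phi> b) \<le> ereal (r - \<delta>)"
  proof (rule SUP_least)
    fix b assume "b \<in> B"
    then obtain a where "a \<in> F" "\<phi> b + ereal \<delta> \<le> \<phi> a"
      using gap by blast
    moreover have "\<phi> a \<le> m"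
      unfolding m_def using \<open>a \<in> F\<close> F(1) by simp
    ultimately have "\<phi> b + ereal \<delta> \<le> ereal r"
      using r by simp
    then show "\<phi> b \<le> ereal (r - \<delta>)"
      by (cases "\<phi> b") auto
  qed
  also have "\<dots> < ereal r"
    using \<open>\<delta> > 0\<close> by simp
  also have "\<dots> \<le> (SUP a\<in>A. \<phi> a)"
    using \<open>a\<^sub>0 \<in> F\<close> \<open>\<phi> a\<^sub>0 = m\<close> r F(3) by (auto intro: SUP_upper2)
  finally show ?thesis .
qed

lemma INF_phi_less:
  assumes "B \<in> P0 C" and "A \<noteq> {}" and "C_compact (uminus ` C) A" and less: "A \<subseteq> mdiff B (interior C)"
  shows "(INF b\<in>B. \<phi> b) < (INF a\<in>A. \<phi> a)"
proof -
  have local_gap: "\<exists>U b \<epsilon>. open U \<and> a \<in> msum U (uminus ` C) \<and> b \<in> B \<and> \<epsilon> > 0 \<and>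
                           (\<forall>y\<in>msum U (uminus ` C). \<phi> b + ereal \<epsilon> \<le> \<phi> y)"
    if "a \<in> A" for a
  proof -
    obtain b c where "b \<in> B" "c \<in> interior C" "a = b - c"
      using less \<open>a \<in> A\<close> unfolding mdiff_def by blast
    then show ?thesis
      using phi_local_gap_below[of c b] by blast
  qed
  have "\<exists>F \<delta>. finite F \<and> F \<noteq> {} \<and> F \<subseteq> B \<and> \<delta> > 0 \<and> (\<forall>a\<in>A. \<exists>b\<in>F. \<phi> b + ereal \<delta> \<le> \<phi> a)"
    by (rule C_compact_uniform_gap[where R = "\<lambda>y b \<epsilon>. \<phi> b + ereal \<epsilon> \<le> \<phi> y",
          OF \<open>C_compact (uminus ` C) A\<close> \<open>A \<noteq> {}\<close> local_gap phi_add_gap_mono])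
  then obtain F \<delta> where F: "finite F" "F \<noteq> {}" "F \<subseteq> B" and "\<delta> > 0"
    and gap: "\<forall>a\<in>A. \<exists>b\<in>F. \<phi> b + ereal \<delta> \<le> \<phi> a"
    by blast
  define m where "m = Min (\<phi> ` F)"
  have "m \<in> \<phi> ` F"
    unfolding m_def using F(1,2) by (intro Min_in) simp_all
  then obtain b\<^sub>0 where "b\<^sub>0 \<in> F" "\<phi> b\<^sub>0 = m"
    by (metis imageE)
  moreover have "\<bar>\<phi> b\<^sub>0\<bar> \<noteq> \<infinity>"
    using \<open>b\<^sub>0 \<in> F\<close> F(3) by (intro phi_finite[OF \<open>B \<in> P0 C\<close>]) blast
  ultimately obtain r where r: "m = ereal r"
    by (cases m) auto
  have "(INF b\<in>B. \<phi> b) \<le> ereal r"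
    using \<open>b\<^sub>0 \<in> F\<close> \<open>\<phi> b\<^sub>0 = m\<close> r F(3) by (auto intro: INF_lower2)
  also have "\<dots> < ereal (r + \<delta>)"
    using \<open>\<delta> > 0\<close> by simp
  also have "\<dots> \<le> (INF a\<in>A. \<phi> a)"
  proof (rule INF_greatest)
    fix a assume "a \<in> A"
    then obtain b where "b \<in> F" "\<phi> b + ereal \<delta> \<le> \<phi> a"
      using gap by blast
    have "ereal (r + \<delta>) = m + ereal \<delta>"
      using r by simp
    also have "\<dots> \<le> \<phi> b + ereal \<delta>"
      unfolding m_def using \<open>b \<in> F\<close> F(1) by (intro add_right_mono) simp
    also have "\<dots> \<le> \<phi> a"
      by fact
    finally show "ereal (r + \<delta>) \<le> \<phi> a" .
  qed
  finally show ?thesis .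
qed

lemma v_e_strict_mono:
  assumes "A \<in> P0 C" "B \<in> P0 C" "mp_C_compact C A" "mp_C_compact C B" "set_less_s C A B"
  shows "lt2 (v_e C e A) (v_e C e B)"
proof -
  have "A \<noteq> {}" "B \<noteq> {}"
    using assms(1,2) unfolding P0_def by auto
  moreover have "C_compact C B" "C_compact (uminus ` C) A"
    using assms(3,4) unfolding mp_C_compact_def by auto
  moreover have "B \<subseteq> msum A (interior C)" "A \<subseteq> mdiff B (interior C)"
    using assms(5) unfolding set_less_s_def by auto
  ultimately show ?thesis
    unfolding lt2_def v_e_eq using SUP_phi_less[OF assms(1)] INF_phi_less[OF assms(2)] by simp
qed

lemma v_e_s_class:
  assumes "A \<in> s_class C B"
  shows "v_e C e A = v_e C e B"
proof -
  have "le2 (v_e C e A) (v_e C e B)" "le2 (v_e C e B) (v_e C e A)"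
    using assms v_e_mono unfolding s_class_def set_equiv_s_def by auto
  then show ?thesis
    unfolding le2_def prod_eq_iff by (meson order_antisym)
qed

end

theorem mainTheorem5:
  fixes C :: "'a::{real_vector,topological_space} set" and e :: 'a
  assumes "topological_linear_space TYPE('a)"
    and "convex C" and "closed C" and "cone C" and "C \<inter> uminus ` C = {0}"
    and "interior C \<noteq> {}"
    and "e \<in> uminus ` interior C"
  shows "s_increasing C (P0 C) (v_e C e)
    \<and> strictly_s_increasing C {A \<in> P0 C. mp_C_compact C A} (v_e C e)
    \<and> (\<forall>A\<in>P0 C. \<forall>B\<in>P0 C. A \<in> s_class C B \<longrightarrow> v_e C e A = v_e C e B)"
proof -
  interpret scalarization C e
    using assms(1,2,4,7) by unfold_locales auto
  show ?thesis
    unfolding s_increasing_def strictly_s_increasing_def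
    using v_e_mono v_e_strict_mono v_e_s_class by simp
qed

end
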